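(* Let $(\varphi_t)_{t\ge0}$ be a semigroup of analytic functions in the unit disk $\mathbb{D}$ and let $X$ be a Banach space of analytic functions on $\mathbb{D}$ on which each composition operator $C_t f=f\circ\varphi_t$ is bounded, such that (i) polynomials are dense in $X$; (ii) there is a constant $C>0$ such that if $f,g\in X$ and $|f|\le|g|$ on $\mathbb{D}$, then $\|f\|_X\le C\|g\|_X$; (iii) $M:=\limsup_{t\to0^+}\|C_t\|<+\infty$; (iv) the functions $\varphi_t$ ($t\ge0$) belong to $X$ and $\lim_{t\to0^+}\|\varphi_t-\varphi_0\|_X=0$. Then the semigroup of operators $(C_t)_{t\ge0}$ is strongly continuous on $X$, i.e. $\lim_{t\to0^+}\|f\circ\varphi_t-f\|_X=0$ for every $f\in X$.
   Context: A semigroup of analytic functions is a family $\{\varphi_t:t\ge0\}$ of analytic self-maps of $\mathbb{D}$ such that $\varphi_0$ is the identity, $\varphi_{t+s}=\varphi_t\circ\varphi_s$ for all $t,s\ge0$, and $\varphi_t\to\varphi_0$ uniformly on compact subsets of $\mathbb{D}$ as $t\to0^+$. *)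

theory Defs
  imports "HOL-Analysis.Analysis"
begin

abbreviation disk :: "complex set" where "disk \<equiv> ball 0 1"

text \<open>Functions on the disk are represented as functions complex \<Rightarrow> complex
  that vanish outside the disk (so equality of elements means equality on the disk).\<close>
definition restr :: "(complex \<Rightarrow> complex) \<Rightarrow> complex \<Rightarrow> complex" where
  "restr f = (\<lambda>z. if z \<in> disk then f z else 0)"

definition analytic_semigroup :: "(real \<Rightarrow> complex \<Rightarrow> complex) \<Rightarrow> bool" where
  "analytic_semigroup \<phi> \<longleftrightarrow>
     (\<forall>t\<ge>0. \<phi> t holomorphic_on disk \<and> \<phi> t ` disk \<subseteq> disk) \<and>
     (\<forall>z\<in>disk. \<phi> 0 z = z) \<and>
     (\<forall>t\<ge>0. \<forall>s\<ge>0. \<forall>z\<in>disk. \<phi> (t + s) z = \<phi> t (\<phi> s z)) \<and>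
     (\<forall>K. compact K \<and> K \<subseteq> disk \<longrightarrow> uniform_limit K \<phi> (\<phi> 0) (at_right 0))"

definition banach_fun_space ::
  "(complex \<Rightarrow> complex) set \<Rightarrow> ((complex \<Rightarrow> complex) \<Rightarrow> real) \<Rightarrow> bool" where
  "banach_fun_space X N \<longleftrightarrow>
     (\<forall>f\<in>X. f holomorphic_on disk \<and> (\<forall>z. z \<notin> disk \<longrightarrow> f z = 0)) \<and>
     (\<lambda>z. 0) \<in> X \<and> (\<forall>f\<in>X. \<forall>g\<in>X. (\<lambda>z. f z + g z) \<in> X) \<and> (\<forall>c. \<forall>f\<in>X. (\<lambda>z. c * f z) \<in> X) \<and>
     (\<forall>f\<in>X. N f \<ge> 0 \<and> (N f = 0 \<longleftrightarrow> f = (\<lambda>z. 0))) \<and>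
     (\<forall>c. \<forall>f\<in>X. N (\<lambda>z. c * f z) = norm c * N f) \<and>
     (\<forall>f\<in>X. \<forall>g\<in>X. N ((\<lambda>z. f z + g z)) \<le> N f + N g) \<and>
     (\<forall>u :: nat \<Rightarrow> complex \<Rightarrow> complex. (\<forall>n. u n \<in> X) \<and>
         (\<forall>e>0. \<exists>M. \<forall>m\<ge>M. \<forall>n\<ge>M. N (\<lambda>z. u m z - u n z) < e) \<longrightarrow>
         (\<exists>f\<in>X. (\<lambda>n. N (\<lambda>z. u n z - f z)) \<longlonglongrightarrow> 0))"

definition comp_op :: "(real \<Rightarrow> complex \<Rightarrow> complex) \<Rightarrow> real \<Rightarrow> (complex \<Rightarrow> complex) \<Rightarrow> complex \<Rightarrow> complex" where
  "comp_op \<phi> t f = restr (f \<circ> \<phi> t)"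

definition comp_opnorm ::
  "(complex \<Rightarrow> complex) set \<Rightarrow> ((complex \<Rightarrow> complex) \<Rightarrow> real) \<Rightarrow> (real \<Rightarrow> complex \<Rightarrow> complex) \<Rightarrow> real \<Rightarrow> real" where
  "comp_opnorm X N \<phi> t = Sup ((\<lambda>f. N (comp_op \<phi> t f)) ` {f \<in> X. N f \<le> 1})"

end

theory Submission
  imports Defs
begin

text \<open>A polynomial \<open>P\<close> is Lipschitz on the disk, say with constant \<open>K\<close>, so
  \<open>|P \<circ> \<phi>\<^sub>t - P| \<le> K |\<phi>\<^sub>t - \<phi>\<^sub>0|\<close> pointwise because \<open>\<phi>\<^sub>0\<close> is the identity. The lattice
  property (ii) turns this into \<open>\<parallel>C\<^sub>t P - P\<parallel> \<le> C K \<parallel>\<phi>\<^sub>t - \<phi>\<^sub>0\<parallel>\<close>, which tends to 0 by (iv).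
  By (iii) the operators \<open>C\<^sub>t\<close> are uniformly bounded for small \<open>t\<close>, and since polynomials
  are dense (i), an \<open>\<epsilon>/3\<close>-argument extends the convergence to all of \<open>X\<close>.\<close>

lemma banach_fun_space_add:
  "banach_fun_space X N \<Longrightarrow> f \<in> X \<Longrightarrow> g \<in> X \<Longrightarrow> (\<lambda>z. f z + g z) \<in> X"
  unfolding banach_fun_space_def by blast

lemma banach_fun_space_scale:
  "banach_fun_space X N \<Longrightarrow> f \<in> X \<Longrightarrow> (\<lambda>z. c * f z) \<in> X"
  unfolding banach_fun_space_def by blast

lemma banach_fun_space_diff:
  assumes "banach_fun_space X N" "f \<in> X" "g \<in> X"
  shows "(\<lambda>z. f z - g z) \<in> X"
  using banach_fun_space_add[OF assms(1,2) banach_fun_space_scale[OF assms(1,3), of "-1"]]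
  by simp

lemma banach_fun_space_norm_nonneg:
  "banach_fun_space X N \<Longrightarrow> f \<in> X \<Longrightarrow> 0 \<le> N f"
  unfolding banach_fun_space_def by blast

lemma banach_fun_space_norm_eq_0_iff:
  "banach_fun_space X N \<Longrightarrow> f \<in> X \<Longrightarrow> N f = 0 \<longleftrightarrow> f = (\<lambda>z. 0)"
  unfolding banach_fun_space_def by blast

lemma banach_fun_space_norm_scale:
  "banach_fun_space X N \<Longrightarrow> f \<in> X \<Longrightarrow> N (\<lambda>z. c * f z) = norm c * N f"
  unfolding banach_fun_space_def by blast

lemma banach_fun_space_norm_triangle:
  "banach_fun_space X N \<Longrightarrow> f \<in> X \<Longrightarrow> g \<in> X \<Longrightarrow> N (\<lambda>z. f z + g z) \<le> N f + N g"
  unfolding banach_fun_space_def by blast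

lemma banach_fun_space_norm_minus_commute:
  assumes X: "banach_fun_space X N" and "f \<in> X" "g \<in> X"
  shows "N (\<lambda>z. g z - f z) = N (\<lambda>z. f z - g z)"
proof -
  have "(\<lambda>z. g z - f z) = (\<lambda>z. (-1) * (f z - g z))"
    by auto
  then show ?thesis
    using banach_fun_space_norm_scale[OF X banach_fun_space_diff[OF assms], of "-1"] by simp
qed

lemma analytic_semigroup_maps_disk:
  "analytic_semigroup \<phi> \<Longrightarrow> 0 \<le> t \<Longrightarrow> z \<in> disk \<Longrightarrow> \<phi> t z \<in> disk"
  unfolding analytic_semigroup_def by blast

lemma analytic_semigroup_at_0:
  "analytic_semigroup \<phi> \<Longrightarrow> z \<in> disk \<Longrightarrow> \<phi> 0 z = z"
  unfolding analytic_semigroup_def by blast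

lemma comp_op_zero: "comp_op \<phi> t (\<lambda>z. 0) = (\<lambda>z. 0)"
  by (auto simp: comp_op_def restr_def)

lemma comp_op_scale: "comp_op \<phi> t (\<lambda>z. c * f z) = (\<lambda>z. c * comp_op \<phi> t f z)"
  by (auto simp: comp_op_def restr_def)

lemma comp_op_diff:
  "comp_op \<phi> t (\<lambda>z. f z - g z) = (\<lambda>z. comp_op \<phi> t f z - comp_op \<phi> t g z)"
  by (auto simp: comp_op_def restr_def)

lemma comp_op_norm_le_opnorm:
  assumes X: "banach_fun_space X N"
    and comp_in: "\<And>f. f \<in> X \<Longrightarrow> comp_op \<phi> t f \<in> X"
    and bounded: "\<And>f. f \<in> X \<Longrightarrow> N (comp_op \<phi> t f) \<le> B * N f"
    and g: "g \<in> X"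
  shows "N (comp_op \<phi> t g) \<le> comp_opnorm X N \<phi> t * N g"
proof (cases "N g = 0")
  case True
  then have "g = (\<lambda>z. 0)"
    using banach_fun_space_norm_eq_0_iff[OF X g] by blast
  then show ?thesis
    using True by (simp add: comp_op_zero)
next
  case False
  then have pos: "N g > 0"
    using banach_fun_space_norm_nonneg[OF X g] by simp
  have bdd: "bdd_above ((\<lambda>f. N (comp_op \<phi> t f)) ` {f \<in> X. N f \<le> 1})"
  proof (rule bdd_aboveI2)
    fix f assume "f \<in> {f \<in> X. N f \<le> 1}"
    then have f: "f \<in> X" "0 \<le> N f" "N f \<le> 1"
      using banach_fun_space_norm_nonneg[OF X] by auto
    have "N (comp_op \<phi> t f) \<le> B * N f"
      using bounded f(1) .
    also have "\<dots> \<le> \<bar>B\<bar> * N f"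
      using f(2) by (rule mult_right_mono[OF abs_ge_self])
    also have "\<dots> \<le> \<bar>B\<bar>"
      using f(3) by (rule mult_left_le) simp
    finally show "N (comp_op \<phi> t f) \<le> \<bar>B\<bar>" .
  qed
  define c where "c = complex_of_real (1 / N g)"
  have norm_c: "norm c = 1 / N g"
    using pos by (simp add: c_def norm_divide)
  have cg: "(\<lambda>z. c * g z) \<in> X" "N (\<lambda>z. c * g z) \<le> 1"
    using banach_fun_space_scale[OF X g] banach_fun_space_norm_scale[OF X g] norm_c pos by auto
  have "norm c * N (comp_op \<phi> t g) = N (comp_op \<phi> t (\<lambda>z. c * g z))"
    using banach_fun_space_norm_scale[OF X comp_in[OF g]] by (simp add: comp_op_scale)
  also have "\<dots> \<le> comp_opnorm X N \<phi> t"
    unfolding comp_opnorm_def using cg by (intro cSUP_upper bdd) auto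
  finally have scaled: "norm c * N (comp_op \<phi> t g) \<le> comp_opnorm X N \<phi> t" .
  have "N (comp_op \<phi> t g) = N g * (norm c * N (comp_op \<phi> t g))"
    using norm_c pos by simp
  also have "\<dots> \<le> N g * comp_opnorm X N \<phi> t"
    using scaled pos by (intro mult_left_mono) auto
  finally show ?thesis
    by (simp only: mult.commute)
qed

lemma Limsup_less_infinity_imp_eventually_bounded:
  assumes "Limsup F (\<lambda>x. ereal (f x)) < \<infinity>"
  obtains M :: real where "0 < M" "eventually (\<lambda>x. f x < M) F"
proof -
  have "Limsup F (\<lambda>x. ereal (f x)) \<noteq> \<infinity>"
    using assms by simp
  then obtain n :: nat where "Limsup F (\<lambda>x. ereal (f x)) < ereal (real n)"
    unfolding less_PInf_Ex_of_nat ..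
  then have "eventually (\<lambda>x. f x < real n + 1) F"
    by (rule eventually_mono[OF Limsup_lessD]) simp
  then show thesis
    using that[of "real n + 1"] by simp
qed

lemma comp_op_eventually_bounded:
  assumes X: "banach_fun_space X N"
    and comp_in: "\<And>t f. 0 \<le> t \<Longrightarrow> f \<in> X \<Longrightarrow> comp_op \<phi> t f \<in> X"
    and comp_bdd: "\<And>t. 0 \<le> t \<Longrightarrow> \<exists>B. \<forall>f\<in>X. N (comp_op \<phi> t f) \<le> B * N f"
    and limsup: "Limsup (at_right 0) (\<lambda>t. ereal (comp_opnorm X N \<phi> t)) < \<infinity>"
  obtains M where "0 < M" "eventually (\<lambda>t. \<forall>f\<in>X. N (comp_op \<phi> t f) \<le> M * N f) (at_right 0)"
proof -
  obtain M where "0 < M" and opnorm_M: "eventually (\<lambda>t. comp_opnorm X N \<phi> t < M) (at_right 0)"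
    using Limsup_less_infinity_imp_eventually_bounded[OF limsup] by blast
  have "eventually (\<lambda>t. \<forall>f\<in>X. N (comp_op \<phi> t f) \<le> M * N f) (at_right 0)"
    using opnorm_M eventually_at_right_less
  proof eventually_elim
    case (elim t)
    then have t: "0 \<le> t"
      by simp
    then obtain B where B: "\<And>f. f \<in> X \<Longrightarrow> N (comp_op \<phi> t f) \<le> B * N f"
      using comp_bdd by blast
    show ?case
    proof
      fix f assume f: "f \<in> X"
      have "N (comp_op \<phi> t f) \<le> comp_opnorm X N \<phi> t * N f"
        by (rule comp_op_norm_le_opnorm[OF X comp_in[OF t] B f])
      also have "\<dots> \<le> M * N f"
        using elim banach_fun_space_norm_nonneg[OF X f] by (intro mult_right_mono) auto
      finally show "N (comp_op \<phi> t f) \<le> M * N f" .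
    qed
  qed
  with \<open>0 < M\<close> show thesis
    by (rule that)
qed

lemma lipschitz_on_poly:
  fixes p :: "'a::real_normed_field poly"
  assumes "compact S" "convex S"
  obtains K where "K-lipschitz_on S (poly p)"
proof -
  have "bounded (poly (pderiv p) ` S)"
    by (intro compact_imp_bounded compact_continuous_image assms(1) continuous_intros)
  then obtain B where "B > 0" and B: "\<And>z. z \<in> S \<Longrightarrow> norm (poly (pderiv p) z) \<le> B"
    by (auto simp: bounded_pos)
  have "norm (poly p w - poly p z) \<le> B * norm (w - z)" if "w \<in> S" "z \<in> S" for w z
    using field_differentiable_bound[OF assms(2) has_field_derivative_at_within[OF poly_DERIV] B]
      that by blast
  then have "B-lipschitz_on S (poly p)"
    using \<open>B > 0\<close> by (intro lipschitz_onI) (auto simp: dist_norm)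
  then show thesis
    using that by blast
qed

lemma comp_op_tendsto_of_lipschitz:
  assumes semi: "analytic_semigroup \<phi>"
    and X: "banach_fun_space X N"
    and comp_in: "\<And>t f. 0 \<le> t \<Longrightarrow> f \<in> X \<Longrightarrow> comp_op \<phi> t f \<in> X"
    and lattice: "\<And>f g. f \<in> X \<Longrightarrow> g \<in> X \<Longrightarrow> (\<forall>z\<in>disk. norm (f z) \<le> norm (g z))
                    \<Longrightarrow> N f \<le> C * N g"
    and phi_in: "\<And>t. 0 \<le> t \<Longrightarrow> restr (\<phi> t) \<in> X"
    and phi_cont: "((\<lambda>t. N (\<lambda>z. restr (\<phi> t) z - restr (\<phi> 0) z)) \<longlongrightarrow> 0) (at_right 0)"
    and g: "g \<in> X" and lip: "K-lipschitz_on disk g"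
  shows "((\<lambda>t. N (\<lambda>z. comp_op \<phi> t g z - g z)) \<longlongrightarrow> 0) (at_right 0)"
proof (rule tendsto_sandwich)
  have K: "0 \<le> K"
    using lip by (rule lipschitz_on_nonneg)
  have diff_in: "(\<lambda>z. comp_op \<phi> t g z - g z) \<in> X" if "0 \<le> t" for t
    using that by (intro banach_fun_space_diff[OF X] comp_in g)
  have "N (\<lambda>z. comp_op \<phi> t g z - g z) \<le> C * K * N (\<lambda>z. restr (\<phi> t) z - restr (\<phi> 0) z)"
    if t: "0 \<le> t" for t
  proof -
    define D where "D = (\<lambda>z. restr (\<phi> t) z - restr (\<phi> 0) z)"
    have D: "D \<in> X"
      unfolding D_def using t by (intro banach_fun_space_diff[OF X] phi_in) auto
    have "norm (comp_op \<phi> t g z - g z) \<le> norm (of_real K * D z)" if z: "z \<in> disk" for z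
    proof -
      have "\<phi> t z \<in> disk"
        using analytic_semigroup_maps_disk[OF semi t z] .
      then have "norm (comp_op \<phi> t g z - g z) \<le> K * norm (\<phi> t z - z)"
        using lipschitz_onD[OF lip _ z] z by (simp add: comp_op_def restr_def dist_norm)
      also have "\<dots> = norm (of_real K * D z)"
        using z K analytic_semigroup_at_0[OF semi z] by (simp add: D_def restr_def norm_mult)
      finally show ?thesis .
    qed
    then have "N (\<lambda>z. comp_op \<phi> t g z - g z) \<le> C * N (\<lambda>z. of_real K * D z)"
      by (intro lattice diff_in t banach_fun_space_scale[OF X D]) blast
    also have "N (\<lambda>z. of_real K * D z) = K * N D"
      using banach_fun_space_norm_scale[OF X D, of "of_real K"] K by simp
    finally show ?thesis
      by (simp add: D_def mult.assoc)
  qed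
  then show "eventually (\<lambda>t. N (\<lambda>z. comp_op \<phi> t g z - g z)
      \<le> C * K * N (\<lambda>z. restr (\<phi> t) z - restr (\<phi> 0) z)) (at_right 0)"
    by (rule eventually_mono[OF eventually_at_right_less]) simp
  show "eventually (\<lambda>t. 0 \<le> N (\<lambda>z. comp_op \<phi> t g z - g z)) (at_right 0)"
    using banach_fun_space_norm_nonneg[OF X diff_in]
    by (rule eventually_mono[OF eventually_at_right_less]) simp
  show "((\<lambda>t. C * K * N (\<lambda>z. restr (\<phi> t) z - restr (\<phi> 0) z)) \<longlongrightarrow> 0) (at_right 0)"
    using tendsto_mult_right_zero[OF phi_cont] by simp
qed auto

lemma comp_op_tendsto_poly:
  assumes semi: "analytic_semigroup \<phi>"
    and X: "banach_fun_space X N"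
    and comp_in: "\<And>t f. 0 \<le> t \<Longrightarrow> f \<in> X \<Longrightarrow> comp_op \<phi> t f \<in> X"
    and lattice: "\<And>f g. f \<in> X \<Longrightarrow> g \<in> X \<Longrightarrow> (\<forall>z\<in>disk. norm (f z) \<le> norm (g z))
                    \<Longrightarrow> N f \<le> C * N g"
    and phi_in: "\<And>t. 0 \<le> t \<Longrightarrow> restr (\<phi> t) \<in> X"
    and phi_cont: "((\<lambda>t. N (\<lambda>z. restr (\<phi> t) z - restr (\<phi> 0) z)) \<longlongrightarrow> 0) (at_right 0)"
    and p: "restr (poly p) \<in> X"
  shows "((\<lambda>t. N (\<lambda>z. comp_op \<phi> t (restr (poly p)) z - restr (poly p) z)) \<longlongrightarrow> 0) (at_right 0)"
proof -
  obtain K where "K-lipschitz_on (cball 0 1) (poly p)"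
    by (rule lipschitz_on_poly[OF compact_cball convex_cball])
  then have "K-lipschitz_on disk (poly p)"
    by (rule lipschitz_on_subset[OF _ ball_subset_cball])
  then have lip: "K-lipschitz_on disk (restr (poly p))"
    by (rule lipschitz_on_transform) (simp add: restr_def)
  show ?thesis
    by (rule comp_op_tendsto_of_lipschitz[OF semi X comp_in lattice phi_in phi_cont p lip])
qed

lemma norm_comp_op_diff_le:
  assumes X: "banach_fun_space X N"
    and comp_in: "\<And>f. f \<in> X \<Longrightarrow> comp_op \<phi> t f \<in> X"
    and f: "f \<in> X" and g: "g \<in> X"
  shows "N (\<lambda>z. comp_op \<phi> t f z - f z)
    \<le> N (comp_op \<phi> t (\<lambda>z. f z - g z)) + N (\<lambda>z. comp_op \<phi> t g z - g z) + N (\<lambda>z. f z - g z)"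
proof -
  have fg: "(\<lambda>z. f z - g z) \<in> X"
    by (rule banach_fun_space_diff[OF X f g])
  define A where "A = comp_op \<phi> t (\<lambda>z. f z - g z)"
  define B where "B = (\<lambda>z. comp_op \<phi> t g z - g z)"
  have A: "A \<in> X"
    unfolding A_def by (rule comp_in[OF fg])
  have B: "B \<in> X"
    unfolding B_def by (rule banach_fun_space_diff[OF X comp_in[OF g] g])
  have decomp: "(\<lambda>z. comp_op \<phi> t f z - f z) = (\<lambda>z. (\<lambda>z. A z + B z) z + (g z - f z))"
    by (simp add: A_def B_def comp_op_diff)
  have "N (\<lambda>z. comp_op \<phi> t f z - f z) \<le> N (\<lambda>z. A z + B z) + N (\<lambda>z. g z - f z)"
    unfolding decomp
    by (rule banach_fun_space_norm_triangle[OF X banach_fun_space_add[OF X A B]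
          banach_fun_space_diff[OF X g f]])
  also have "\<dots> \<le> N A + N B + N (\<lambda>z. f z - g z)"
    using banach_fun_space_norm_triangle[OF X A B] banach_fun_space_norm_minus_commute[OF X f g]
    by linarith
  finally show ?thesis
    by (simp only: A_def B_def)
qed

lemma comp_op_tendsto_of_dense:
  assumes X: "banach_fun_space X N"
    and comp_in: "\<And>t f. 0 \<le> t \<Longrightarrow> f \<in> X \<Longrightarrow> comp_op \<phi> t f \<in> X"
    and bounded: "eventually (\<lambda>t. \<forall>f\<in>X. N (comp_op \<phi> t f) \<le> M * N f) (at_right 0)"
    and M: "0 \<le> M"
    and D: "D \<subseteq> X"
    and dense: "\<And>f e. f \<in> X \<Longrightarrow> 0 < e \<Longrightarrow> \<exists>g\<in>D. N (\<lambda>z. f z - g z) < e"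
    and tendsto_D: "\<And>g. g \<in> D \<Longrightarrow> ((\<lambda>t. N (\<lambda>z. comp_op \<phi> t g z - g z)) \<longlongrightarrow> 0) (at_right 0)"
    and f: "f \<in> X"
  shows "((\<lambda>t. N (\<lambda>z. comp_op \<phi> t f z - f z)) \<longlongrightarrow> 0) (at_right 0)"
proof (rule tendstoI)
  fix e :: real assume e: "0 < e"
  define \<delta> where "\<delta> = e / (2 * (M + 1))"
  have "0 < \<delta>"
    using e M by (simp add: \<delta>_def)
  then obtain g where "g \<in> D" and g_approx: "N (\<lambda>z. f z - g z) < \<delta>"
    using dense[OF f] by blast
  then have g: "g \<in> X"
    using D by blast
  have fg: "(\<lambda>z. f z - g z) \<in> X"
    by (rule banach_fun_space_diff[OF X f g])
  have "eventually (\<lambda>t. N (\<lambda>z. comp_op \<phi> t g z - g z) < e / 2) (at_right 0)"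
    using order_tendstoD(2)[OF tendsto_D[OF \<open>g \<in> D\<close>], of "e / 2"] e by simp
  with bounded eventually_at_right_less
  show "eventually (\<lambda>t. dist (N (\<lambda>z. comp_op \<phi> t f z - f z)) 0 < e) (at_right 0)"
  proof eventually_elim
    case (elim t)
    then have t: "0 \<le> t"
      by simp
    have "N (comp_op \<phi> t (\<lambda>z. f z - g z)) \<le> M * N (\<lambda>z. f z - g z)"
      using elim(1) fg by blast
    then have "N (\<lambda>z. comp_op \<phi> t f z - f z)
        \<le> M * N (\<lambda>z. f z - g z) + N (\<lambda>z. comp_op \<phi> t g z - g z) + N (\<lambda>z. f z - g z)"
      using norm_comp_op_diff_le[OF X comp_in[OF t] f g] by linarith
    also have "\<dots> = (M + 1) * N (\<lambda>z. f z - g z) + N (\<lambda>z. comp_op \<phi> t g z - g z)"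
      by (simp add: algebra_simps)
    also have "\<dots> < (M + 1) * \<delta> + e / 2"
      using elim g_approx M by (intro add_le_less_mono mult_left_mono) auto
    also have "(M + 1) * \<delta> + e / 2 = e"
      using M by (simp add: \<delta>_def field_simps)
    finally show ?case
      using banach_fun_space_norm_nonneg[OF X banach_fun_space_diff[OF X comp_in[OF t f] f]]
      by simp
  qed
qed

theorem proposition4p1:
  fixes \<phi> :: "real \<Rightarrow> complex \<Rightarrow> complex"
    and X :: "(complex \<Rightarrow> complex) set"
    and N :: "(complex \<Rightarrow> complex) \<Rightarrow> real"
  assumes semi: "analytic_semigroup \<phi>"
    and banach: "banach_fun_space X N"
    and comp_in: "\<forall>t\<ge>0. \<forall>f\<in>X. comp_op \<phi> t f \<in> X"
    and comp_bdd: "\<forall>t\<ge>0. \<exists>B. \<forall>f\<in>X. N (comp_op \<phi> t f) \<le> B * N f"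
    and poly_in: "\<forall>p :: complex poly. restr (poly p) \<in> X"
    and poly_dense: "\<forall>f\<in>X. \<forall>e>0. \<exists>p :: complex poly. N (\<lambda>z. f z - restr (poly p) z) < e"
    and lattice: "\<exists>C>0. \<forall>f\<in>X. \<forall>g\<in>X. (\<forall>z\<in>disk. norm (f z) \<le> norm (g z)) \<longrightarrow> N f \<le> C * N g"
    and limsup: "Limsup (at_right 0) (\<lambda>t. ereal (comp_opnorm X N \<phi> t)) < \<infinity>"
    and phi_in: "\<forall>t\<ge>0. restr (\<phi> t) \<in> X"
    and phi_cont: "((\<lambda>t. N (\<lambda>z. restr (\<phi> t) z - restr (\<phi> 0) z)) \<longlongrightarrow> 0) (at_right 0)"
  shows "\<forall>f\<in>X. ((\<lambda>t. N (\<lambda>z. comp_op \<phi> t f z - f z)) \<longlongrightarrow> 0) (at_right 0)"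
proof
  fix f assume f: "f \<in> X"
  have comp_in': "\<And>t f. 0 \<le> t \<Longrightarrow> f \<in> X \<Longrightarrow> comp_op \<phi> t f \<in> X"
    and comp_bdd': "\<And>t. 0 \<le> t \<Longrightarrow> \<exists>B. \<forall>f\<in>X. N (comp_op \<phi> t f) \<le> B * N f"
    and phi_in': "\<And>t. 0 \<le> t \<Longrightarrow> restr (\<phi> t) \<in> X"
    using comp_in comp_bdd phi_in by blast+
  obtain C where lattice_C: "\<And>f g. f \<in> X \<Longrightarrow> g \<in> X \<Longrightarrow> (\<forall>z\<in>disk. norm (f z) \<le> norm (g z))
      \<Longrightarrow> N f \<le> C * N g"
    using lattice by blast
  obtain M where "0 < M" and bounded: "eventually (\<lambda>t. \<forall>g\<in>X. N (comp_op \<phi> t g) \<le> M * N g) (at_right 0)"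
    by (rule comp_op_eventually_bounded[OF banach comp_in' comp_bdd' limsup])
  let ?polys = "range (\<lambda>p. restr (poly p))"
  have "?polys \<subseteq> X"
    using poly_in by blast
  moreover have "\<exists>P\<in>?polys. N (\<lambda>z. g z - P z) < e" if "g \<in> X" "0 < e" for g e
    using poly_dense that by blast
  moreover have "((\<lambda>t. N (\<lambda>z. comp_op \<phi> t P z - P z)) \<longlongrightarrow> 0) (at_right 0)" if "P \<in> ?polys" for P
    using that poly_in comp_op_tendsto_poly[OF semi banach comp_in' lattice_C phi_in' phi_cont] by blast
  ultimately show "((\<lambda>t. N (\<lambda>z. comp_op \<phi> t f z - f z)) \<longlongrightarrow> 0) (at_right 0)"
    using comp_op_tendsto_of_dense[OF banach comp_in' bounded _ _ _ _ f] \<open>0 < M\<close> by simp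
qed

end
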